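(* Fix a timestep $T$ and consider two spiking neurons $\hat\sigma^T$ and $\tilde\sigma^T$ (same threshold $u_{th}$) with the same temporal input $\tilde h^{T-1}=\hat h^{T-1}$ and spatial input features $\hat x^T,\tilde x^T$. Suppose $\hat u^T=\hat h^{T-1}+\hat x^T$ is a random variable whose distribution is a $u_{th}$-Neighborhood-Finite Distribution, and suppose $|\tilde x^T-\hat x^T|\le\epsilon$. Then the probability that the two neurons produce different outputs, $P[\hat\sigma^T(\hat x^T)\neq\tilde\sigma^T(\tilde x^T)]$, has an upper bound proportional to $\epsilon$ (i.e. it is at most a constant multiple of $\epsilon$, the constant depending only on the distribution of $\hat u^T$).
   Context: A Leaky Integrate-and-Fire (LIF) spiking neuron with firing threshold $u_{th}$, reset potential $V_{reset}$ and decay factor $\beta\in(0,1)$ receives spatial input features $x^1,x^2,\dots$ and evolves by $u^t=h^{t-1}+x^t$, $s^t=\mathrm{Hea}(u^t-u_{th})$, $h^t=V_{reset}s^t+\beta u^t(1-s^t)$, where $\mathrm{Hea}(y)=1$ if $y\ge 0$ and $0$ otherwise; $u^t$ is the membrane potential, $h^{t-1}$ the temporal input, and the output at timestep $t$ is written $\sigma^t(x^t)=s^t$. A probability density $p$ is an $m$-Neighborhood-Finite Distribution if there exists $\epsilon>0$ with $\sup_{x\in[m-\epsilon,m+\epsilon]}p(x)<+\infty$; a random variable follows such a distribution if its density does. *)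

theory Defs
  imports "HOL-Probability.Probability"
begin

definition Hea :: "real \<Rightarrow> real" where
  "Hea y = (if y \<ge> 0 then 1 else 0)"

text \<open>Output spike of a LIF neuron at timestep T with threshold u_th, given
  temporal input h (= h^{T-1}) and spatial input x (= x^T):
  u^T = h + x, s^T = Hea(u^T - u_th).\<close>
definition spike_out :: "real \<Rightarrow> real \<Rightarrow> real \<Rightarrow> real" where
  "spike_out uth h x = Hea (h + x - uth)"

definition nfd :: "real \<Rightarrow> (real \<Rightarrow> ennreal) \<Rightarrow> bool" where
  "nfd m p \<longleftrightarrow> (\<exists>e>0. (SUP x\<in>{m - e..m + e}. p x) < \<infinity>)"

end

theory Submission
  imports Defs
begin

text \<open>The two outputs can only differ when the membrane potential \<open>h + xhat\<close> lies within
  \<open>\<epsilon>\<close> of the threshold. If \<open>\<epsilon>\<close> is smaller than the radius \<open>e\<close> of the neighbourhood on which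
  the density is bounded by \<open>B\<close>, that event has probability at most \<open>2 B \<epsilon>\<close>; otherwise the
  trivial bound \<open>1 \<le> \<epsilon> / e\<close> suffices. Hence \<open>C = max (2 B) (1 / e)\<close> works.\<close>

lemma Hea_differs_imp_near:
  assumes "Hea (u - a) \<noteq> Hea (v - a)" and "\<bar>v - u\<bar> \<le> r"
  shows "u \<in> {a - r..a + r}"
  using assms unfolding Hea_def by (auto split: if_splits)

lemma spike_out_differs_imp_near:
  assumes "spike_out uth h x \<noteq> spike_out uth h x'" and "\<bar>x' - x\<bar> \<le> r"
  shows "h + x \<in> {uth - r..uth + r}"
  using assms unfolding spike_out_def by (intro Hea_differs_imp_near) auto

lemma nfd_imp_density_bounded:
  assumes "nfd m p"
  obtains e B where "e > 0" "B \<ge> 0" "\<And>x. x \<in> {m - e..m + e} \<Longrightarrow> p x \<le> ennreal B"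
proof -
  obtain e where "e > 0" and finite: "(SUP x\<in>{m - e..m + e}. p x) < \<infinity>"
    using assms unfolding nfd_def by blast
  moreover have "p x \<le> ennreal (enn2real (SUP x\<in>{m - e..m + e}. p x))"
    if "x \<in> {m - e..m + e}" for x
    using SUP_upper[OF that, of p] finite by (simp add: ennreal_enn2real less_top)
  ultimately show ?thesis using that enn2real_nonneg by blast
qed

lemma distributed_emeasure_interval_le:
  assumes X: "distributed M lborel X p" and "a \<le> b"
    and bound: "\<And>x. x \<in> {a..b} \<Longrightarrow> p x \<le> ennreal B"
  shows "emeasure M (X -` {a..b} \<inter> space M) \<le> ennreal (B * (b - a))"
proof -
  have "emeasure M (X -` {a..b} \<inter> space M) = (\<integral>\<^sup>+x. p x * indicator {a..b} x \<partial>lborel)"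
    using X by (intro distributed_emeasure) auto
  also have "\<dots> \<le> (\<integral>\<^sup>+x. ennreal B * indicator {a..b} x \<partial>lborel)"
    using bound by (intro nn_integral_mono) (simp split: split_indicator)
  also have "\<dots> = ennreal B * ennreal (b - a)"
    using \<open>a \<le> b\<close> by (simp add: nn_integral_cmult_indicator)
  also have "\<dots> = ennreal (B * (b - a))"
    using \<open>a \<le> b\<close> by (simp add: ennreal_mult'')
  finally show ?thesis .
qed

lemma (in prob_space) prob_spike_out_differs_le:
  assumes X: "distributed M lborel (\<lambda>\<omega>. h \<omega> + xhat \<omega>) p"
    and close: "\<forall>\<omega>\<in>space M. \<bar>xtilde \<omega> - xhat \<omega>\<bar> \<le> \<epsilon>" and "\<epsilon> \<ge> 0" and "B \<ge> 0"
    and bound: "\<And>x. x \<in> {uth - \<epsilon>..uth + \<epsilon>} \<Longrightarrow> p x \<le> ennreal B"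
  shows "prob {\<omega>\<in>space M. spike_out uth (h \<omega>) (xhat \<omega>) \<noteq> spike_out uth (h \<omega>) (xtilde \<omega>)}
    \<le> 2 * B * \<epsilon>"
    (is "prob ?E \<le> _")
proof -
  let ?A = "(\<lambda>\<omega>. h \<omega> + xhat \<omega>) -` {uth - \<epsilon>..uth + \<epsilon>} \<inter> space M"
  have "?E \<subseteq> ?A"
    using close spike_out_differs_imp_near by blast
  moreover have "?A \<in> events"
    using X by (auto simp: distributed_def)
  ultimately have "emeasure M ?E \<le> emeasure M ?A"
    by (rule emeasure_mono)
  also have "\<dots> \<le> ennreal (B * ((uth + \<epsilon>) - (uth - \<epsilon>)))"
    using \<open>\<epsilon> \<ge> 0\<close> bound by (intro distributed_emeasure_interval_le[OF X]) auto
  finally show ?thesis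
    using \<open>\<epsilon> \<ge> 0\<close> \<open>B \<ge> 0\<close> by (simp add: measure_def enn2real_leI algebra_simps)
qed

theorem lemma2:
  fixes M :: "'a measure" and uth :: real and p :: "real \<Rightarrow> ennreal"
  assumes "prob_space M"
    and "nfd uth p"
  shows "\<exists>C\<ge>0. \<forall>(h :: 'a \<Rightarrow> real) xhat xtilde (\<epsilon> :: real).
           h \<in> borel_measurable M \<longrightarrow> xhat \<in> borel_measurable M \<longrightarrow>
           xtilde \<in> borel_measurable M \<longrightarrow>
           distributed M lborel (\<lambda>\<omega>. h \<omega> + xhat \<omega>) p \<longrightarrow>
           (\<forall>\<omega>\<in>space M. \<bar>xtilde \<omega> - xhat \<omega>\<bar> \<le> \<epsilon>) \<longrightarrow>
           measure M {\<omega>\<in>space M. spike_out uth (h \<omega>) (xhat \<omega>) \<noteq> spike_out uth (h \<omega>) (xtilde \<omega>)}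
             \<le> C * \<epsilon>"
proof -
  interpret prob_space M by fact
  obtain e B where "e > 0" "B \<ge> 0" and bound: "\<And>x. x \<in> {uth - e..uth + e} \<Longrightarrow> p x \<le> ennreal B"
    using nfd_imp_density_bounded[OF assms(2)] by blast
  define C where "C = max (2 * B) (1 / e)"
  show ?thesis
  proof (intro exI[of _ C] conjI allI impI)
    show "C \<ge> 0" unfolding C_def using \<open>B \<ge> 0\<close> by simp
    fix h xhat xtilde :: "'a \<Rightarrow> real" and \<epsilon> :: real
    assume X: "distributed M lborel (\<lambda>\<omega>. h \<omega> + xhat \<omega>) p"
      and close: "\<forall>\<omega>\<in>space M. \<bar>xtilde \<omega> - xhat \<omega>\<bar> \<le> \<epsilon>"
    have "\<epsilon> \<ge> 0"
      using close not_empty by force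
    show "prob {\<omega>\<in>space M. spike_out uth (h \<omega>) (xhat \<omega>) \<noteq> spike_out uth (h \<omega>) (xtilde \<omega>)}
        \<le> C * \<epsilon>"
    proof (cases "\<epsilon> < e")
      case True
      then have "prob {\<omega>\<in>space M. spike_out uth (h \<omega>) (xhat \<omega>) \<noteq> spike_out uth (h \<omega>) (xtilde \<omega>)}
          \<le> 2 * B * \<epsilon>"
        using \<open>\<epsilon> \<ge> 0\<close> \<open>B \<ge> 0\<close> bound by (intro prob_spike_out_differs_le[OF X close]) auto
      also have "\<dots> \<le> C * \<epsilon>"
        unfolding C_def using \<open>\<epsilon> \<ge> 0\<close> by (intro mult_right_mono) auto
      finally show ?thesis .
    next
      case False
      have "1 \<le> (1 / e) * \<epsilon>"
        using False \<open>e > 0\<close> by simp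
      also have "\<dots> \<le> C * \<epsilon>"
        unfolding C_def using \<open>\<epsilon> \<ge> 0\<close> by (intro mult_right_mono) auto
      finally show ?thesis
        by (rule order_trans[OF prob_le_1])
    qed
  qed
qed

end
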